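(* Let $\langle M,\sqsubseteq\rangle$ be a mereological structure. Then $\langle M,\mathsf{S}_{\sqsubseteq}\rangle$ satisfies the sum axioms (S1)–(S5) (with $\mathsf{S}:=\mathsf{S}_{\sqsubseteq}$), i.e. it is a sum structure.
   Context: A mereological structure is a pair $\langle M,\sqsubseteq\rangle$ where $M$ is a non-empty set and $\sqsubseteq\subseteq M\times M$ satisfies, for all $x,y,z\in M$: (P1) $x\sqsubseteq x$; (P2) $x\sqsubseteq y\wedge y\sqsubseteq x\to x=y$; (P3) $x\sqsubseteq y\wedge y\sqsubseteq z\to x\sqsubseteq z$; (P4) if $x\not\sqsubseteq y$ then there is $z\in M$ with $z\sqsubseteq x$ such that there is no $u\in M$ with $u\sqsubseteq z$ and $u\sqsubseteq y$; (P5) for every non-empty $X\subseteq M$ there is $x\in M$ such that every $y\in X$ satisfies $y\sqsubseteq x$, and for every $a\in M$ with $a\sqsubseteq x$ there exist $y\in X$ and $z\in M$ with $z\sqsubseteq y$ and $z\sqsubseteq a$. Overlap: $x\circ_{\sqsubseteq} y$ iff there is $z\in M$ with $z\sqsubseteq x$ and $z\sqsubseteq y$. The induced sum relation $\mathsf{S}_{\sqsubseteq}\subseteq M\times\mathcal{P}(M)$: $x\,\mathsf{S}_{\sqsubseteq}\,X$ iff every $y\in X$ satisfies $y\sqsubseteq x$, and for every $a\in M$ with $a\sqsubseteq x$ there is $y\in X$ with $a\circ_{\sqsubseteq} y$. For a set $M$ and a relation $\mathsf{S}\subseteq M\times\mathcal{P}(M)$ define: $x\sqsubseteq_{\mathsf{S}}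 y$ iff there is $X\subseteq M$ with $y\,\mathsf{S}\,X$ and $x\in X$; $\mathrm{I}(x)=\{y\in M\mid y\sqsubseteq_{\mathsf{S}} x\}$ and for $A\subseteq M$, $\mathrm{I}(A)=\bigcup_{a\in A}\mathrm{I}(a)$; $x$ s-overlaps $y$ iff there are $X,Y\subseteq M$ with $x\,\mathsf{S}\,X$, $y\,\mathsf{S}\,Y$, $X\cap Y\neq\emptyset$; a set $A\subseteq M$ is pre-dense in $B\subseteq M$ iff for every $b\in B$ there is $a\in A$ such that $a$ s-overlaps $b$. Sum axioms: (S1) for every non-empty $X\subseteq M$ there is $x\in M$ with $x\,\mathsf{S}\,X$; (S2) $x\,\mathsf{S}\,X\wedge y\,\mathsf{S}\,X\to x=y$; (S3) $x\,\mathsf{S}\,X\wedge y\,\mathsf{S}\,Y\wedge x\in Y\to y\,\mathsf{S}\,(X\cup Y)$; (S4) if $x\,\mathsf{S}\,X$, $x\,\mathsf{S}\,Y$ and $y\in Y$, then there are $z\in X$ and $Z,U\subseteq M$ with $z\,\mathsf{S}\,Z$, $y\,\mathsf{S}\,U$ and $Z\cap U\neq\emptyset$; (S5) for all $x\in M$ and $X\subseteq M$: if $X$ is pre-dense in $\mathrm{I}(x)$ then $x\,\mathsf{S}\,(\mathrm{I}(x)\cap\mathrm{I}(X))$. *)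

theory Defs
  imports Main
begin

definition overlap :: "'a set \<Rightarrow> ('a \<Rightarrow> 'a \<Rightarrow> bool) \<Rightarrow> 'a \<Rightarrow> 'a \<Rightarrow> bool" where
  "overlap M P x y \<longleftrightarrow> (\<exists>z\<in>M. P z x \<and> P z y)"

definition mereological_structure :: "'a set \<Rightarrow> ('a \<Rightarrow> 'a \<Rightarrow> bool) \<Rightarrow> bool" where
  "mereological_structure M P \<longleftrightarrow>
     M \<noteq> {} \<and>
     (\<forall>x y. P x y \<longrightarrow> x \<in> M \<and> y \<in> M) \<and>
     (\<forall>x\<in>M. P x x) \<and>
     (\<forall>x\<in>M. \<forall>y\<in>M. P x y \<and> P y x \<longrightarrow> x = y) \<and>
     (\<forall>x\<in>M. \<forall>y\<in>M. \<forall>z\<in>M. P x y \<and> P y z \<longrightarrow> P x z) \<and>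
     (\<forall>x\<in>M. \<forall>y\<in>M. \<not> P x y \<longrightarrow>
        (\<exists>z\<in>M. P z x \<and> \<not> (\<exists>u\<in>M. P u z \<and> P u y))) \<and>
     (\<forall>X. X \<subseteq> M \<and> X \<noteq> {} \<longrightarrow>
        (\<exists>x\<in>M. (\<forall>y\<in>X. P y x) \<and>
           (\<forall>a\<in>M. P a x \<longrightarrow> (\<exists>y\<in>X. \<exists>z\<in>M. P z y \<and> P z a))))"

definition induced_sum :: "'a set \<Rightarrow> ('a \<Rightarrow> 'a \<Rightarrow> bool) \<Rightarrow> 'a \<Rightarrow> 'a set \<Rightarrow> bool" where
  "induced_sum M P x X \<longleftrightarrow> x \<in> M \<and> X \<subseteq> M \<and>
     (\<forall>y\<in>X. P y x) \<and> (\<forall>a\<in>M. P a x \<longrightarrow> (\<exists>y\<in>X. overlap M P a y))"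

definition s_part :: "'a set \<Rightarrow> ('a \<Rightarrow> 'a set \<Rightarrow> bool) \<Rightarrow> 'a \<Rightarrow> 'a \<Rightarrow> bool" where
  "s_part M S x y \<longleftrightarrow> (\<exists>X. X \<subseteq> M \<and> S y X \<and> x \<in> X)"

definition ideal_of :: "'a set \<Rightarrow> ('a \<Rightarrow> 'a set \<Rightarrow> bool) \<Rightarrow> 'a \<Rightarrow> 'a set" where
  "ideal_of M S x = {y \<in> M. s_part M S y x}"

definition ideal_set :: "'a set \<Rightarrow> ('a \<Rightarrow> 'a set \<Rightarrow> bool) \<Rightarrow> 'a set \<Rightarrow> 'a set" where
  "ideal_set M S A = (\<Union>a\<in>A. ideal_of M S a)"

definition s_overlaps :: "'a set \<Rightarrow> ('a \<Rightarrow> 'a set \<Rightarrow> bool) \<Rightarrow> 'a \<Rightarrow> 'a \<Rightarrow> bool" where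
  "s_overlaps M S x y \<longleftrightarrow>
     (\<exists>X Y. X \<subseteq> M \<and> Y \<subseteq> M \<and> S x X \<and> S y Y \<and> X \<inter> Y \<noteq> {})"

definition pre_dense :: "'a set \<Rightarrow> ('a \<Rightarrow> 'a set \<Rightarrow> bool) \<Rightarrow> 'a set \<Rightarrow> 'a set \<Rightarrow> bool" where
  "pre_dense M S A B \<longleftrightarrow> (\<forall>b\<in>B. \<exists>a\<in>A. s_overlaps M S a b)"

definition sum_structure :: "'a set \<Rightarrow> ('a \<Rightarrow> 'a set \<Rightarrow> bool) \<Rightarrow> bool" where
  "sum_structure M S \<longleftrightarrow>
     (\<forall>x X. S x X \<longrightarrow> x \<in> M \<and> X \<subseteq> M) \<and>
     \<comment> \<open>S1\<close>
     (\<forall>X. X \<subseteq> M \<and> X \<noteq> {} \<longrightarrow> (\<exists>x\<in>M. S x X)) \<and>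
     \<comment> \<open>S2\<close>
     (\<forall>x\<in>M. \<forall>y\<in>M. \<forall>X. X \<subseteq> M \<longrightarrow> S x X \<and> S y X \<longrightarrow> x = y) \<and>
     \<comment> \<open>S3\<close>
     (\<forall>x\<in>M. \<forall>y\<in>M. \<forall>X Y. X \<subseteq> M \<and> Y \<subseteq> M \<longrightarrow>
        S x X \<and> S y Y \<and> x \<in> Y \<longrightarrow> S y (X \<union> Y)) \<and>
     \<comment> \<open>S4\<close>
     (\<forall>x\<in>M. \<forall>y\<in>M. \<forall>X Y. X \<subseteq> M \<and> Y \<subseteq> M \<longrightarrow>
        S x X \<and> S x Y \<and> y \<in> Y \<longrightarrow>
        (\<exists>z\<in>X. \<exists>Z U. Z \<subseteq> M \<and> U \<subseteq> M \<and> S z Z \<and> S y U \<and> Z \<inter> U \<noteq> {})) \<and>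
     \<comment> \<open>S5\<close>
     (\<forall>x\<in>M. \<forall>X. X \<subseteq> M \<longrightarrow>
        pre_dense M S X (ideal_of M S x) \<longrightarrow>
        S x (ideal_of M S x \<inter> ideal_set M S X))"

end

theory Submission
  imports Defs
begin

text \<open>The s-parthood, s-overlap and ideals of the induced sum are just the parthood,
  overlap and principal down-sets of the mereological structure (the pair {x, y} has sum y
  whenever x is part of y), so (S1), (S3), (S4) and (S5) unwind to fusion, transitivity and
  the definition of overlap. Uniqueness (S2) is strong supplementation: two sums of the same
  set are parts of each other, since a part of one sum disjoint from the other would still
  have to overlap a summand, which lies below the other.\<close>

lemma overlap_sym: "overlap M P x y \<longleftrightarrow> overlap M P y x"
  unfolding overlap_def by blast

locale mereology =
  fixes M :: "'a set" and P :: "'a \<Rightarrow> 'a \<Rightarrow> bool"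
  assumes part_in_carrier: "P x y \<Longrightarrow> x \<in> M \<and> y \<in> M"
    and part_refl: "x \<in> M \<Longrightarrow> P x x"
    and part_antisym: "P x y \<Longrightarrow> P y x \<Longrightarrow> x = y"
    and part_trans: "P x y \<Longrightarrow> P y z \<Longrightarrow> P x z"
    and strong_supplementation:
      "x \<in> M \<Longrightarrow> y \<in> M \<Longrightarrow> \<not> P x y \<Longrightarrow> \<exists>z\<in>M. P z x \<and> \<not> overlap M P z y"
    and fusion:
      "X \<subseteq> M \<Longrightarrow> X \<noteq> {} \<Longrightarrow>
        \<exists>x\<in>M. (\<forall>y\<in>X. P y x) \<and> (\<forall>a\<in>M. P a x \<longrightarrow> (\<exists>y\<in>X. overlap M P y a))"

lemma mereology_if_mereological_structure:
  assumes "mereological_structure M P"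
  shows "mereology M P"
proof -
  obtain carrier: "\<forall>x y. P x y \<longrightarrow> x \<in> M \<and> y \<in> M"
    and refl: "\<forall>x\<in>M. P x x"
    and antisym: "\<forall>x\<in>M. \<forall>y\<in>M. P x y \<and> P y x \<longrightarrow> x = y"
    and trans: "\<forall>x\<in>M. \<forall>y\<in>M. \<forall>z\<in>M. P x y \<and> P y z \<longrightarrow> P x z"
    and supplementation: "\<forall>x\<in>M. \<forall>y\<in>M. \<not> P x y \<longrightarrow>
      (\<exists>z\<in>M. P z x \<and> \<not> (\<exists>u\<in>M. P u z \<and> P u y))"
    and fusion: "\<forall>X. X \<subseteq> M \<and> X \<noteq> {} \<longrightarrow> (\<exists>x\<in>M. (\<forall>y\<in>X. P y x) \<and>
      (\<forall>a\<in>M. P a x \<longrightarrow> (\<exists>y\<in>X. \<exists>z\<in>M. P z y \<and> P z a)))"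
    using assms unfolding mereological_structure_def by (elim conjE)
  show ?thesis
  proof
    show "P x y \<Longrightarrow> P y x \<Longrightarrow> x = y" for x y using carrier antisym by blast
    show "P x y \<Longrightarrow> P y z \<Longrightarrow> P x z" for x y z using carrier trans by blast
    show "x \<in> M \<Longrightarrow> y \<in> M \<Longrightarrow> \<not> P x y \<Longrightarrow> \<exists>z\<in>M. P z x \<and> \<not> overlap M P z y" for x y
      using supplementation unfolding overlap_def by blast
    show "X \<subseteq> M \<Longrightarrow> X \<noteq> {} \<Longrightarrow>
        \<exists>x\<in>M. (\<forall>y\<in>X. P y x) \<and> (\<forall>a\<in>M. P a x \<longrightarrow> (\<exists>y\<in>X. overlap M P y a))" for X
      using fusion unfolding overlap_def by blast
  qed (use carrier refl in blast)+
qed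

context mereology
begin

lemma induced_sum_exists:
  assumes "X \<subseteq> M" "X \<noteq> {}"
  shows "\<exists>x\<in>M. induced_sum M P x X"
proof -
  obtain x where "x \<in> M" "\<forall>y\<in>X. P y x" "\<forall>a\<in>M. P a x \<longrightarrow> (\<exists>y\<in>X. overlap M P y a)"
    using fusion[OF assms] by blast
  with assms show ?thesis
    unfolding induced_sum_def by (auto simp: overlap_sym)
qed

lemma induced_sum_pair: "P x y \<Longrightarrow> induced_sum M P y {x, y}"
  using part_in_carrier part_refl unfolding induced_sum_def overlap_def by blast

lemma s_part_iff_part: "s_part M (induced_sum M P) x y \<longleftrightarrow> P x y"
proof
  assume "s_part M (induced_sum M P) x y"
  then show "P x y"
    unfolding s_part_def induced_sum_def by blast
next
  assume "P x y"
  then have "{x, y} \<subseteq> M" "induced_sum M P y {x, y}"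
    using part_in_carrier induced_sum_pair by auto
  then show "s_part M (induced_sum M P) x y"
    unfolding s_part_def by blast
qed

lemma ideal_of_induced_sum: "ideal_of M (induced_sum M P) x = {y. P y x}"
  using s_part_iff_part part_in_carrier unfolding ideal_of_def by blast

lemma ideal_set_induced_sum: "ideal_set M (induced_sum M P) A = {y. \<exists>a\<in>A. P y a}"
  unfolding ideal_set_def ideal_of_induced_sum by blast

lemma s_overlaps_iff_overlap: "s_overlaps M (induced_sum M P) x y \<longleftrightarrow> overlap M P x y"
proof
  assume "s_overlaps M (induced_sum M P) x y"
  then show "overlap M P x y"
    unfolding s_overlaps_def induced_sum_def overlap_def by blast
next
  assume "overlap M P x y"
  then obtain z where "z \<in> M" "P z x" "P z y"
    unfolding overlap_def by blast
  then have "induced_sum M P x {z, x}" "induced_sum M P y {z, y}"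
    and "{z, x} \<subseteq> M" "{z, y} \<subseteq> M"
    using induced_sum_pair part_in_carrier by auto
  then show "s_overlaps M (induced_sum M P) x y"
    unfolding s_overlaps_def by blast
qed

lemma induced_sum_part_of_induced_sum:
  assumes x: "induced_sum M P x X" and y: "induced_sum M P y X"
  shows "P x y"
proof (rule ccontr)
  assume "\<not> P x y"
  moreover have "x \<in> M" "y \<in> M" using x y unfolding induced_sum_def by auto
  ultimately obtain z where "P z x" and z_disjoint: "\<not> overlap M P z y"
    using strong_supplementation by blast
  then obtain w where "w \<in> X" "overlap M P z w"
    using x part_in_carrier unfolding induced_sum_def by blast
  moreover have "P w y" using y \<open>w \<in> X\<close> unfolding induced_sum_def by blast
  ultimately show False
    using z_disjoint part_trans unfolding overlap_def by blast
qed

lemma induced_sum_unique: "induced_sum M P x X \<Longrightarrow> induced_sum M P y X \<Longrightarrow> x = y"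
  using induced_sum_part_of_induced_sum part_antisym by blast

lemma induced_sum_Un:
  assumes "induced_sum M P x X" "induced_sum M P y Y" "x \<in> Y"
  shows "induced_sum M P y (X \<union> Y)"
  using assms part_trans unfolding induced_sum_def by blast

lemma induced_sum_summand_overlaps:
  assumes "induced_sum M P x X" "induced_sum M P x Y" "y \<in> Y"
  shows "\<exists>z\<in>X. s_overlaps M (induced_sum M P) z y"
proof -
  have "y \<in> M" "P y x" using assms(2,3) unfolding induced_sum_def by auto
  then obtain z where "z \<in> X" "overlap M P y z"
    using assms(1) unfolding induced_sum_def by blast
  then show ?thesis
    unfolding s_overlaps_iff_overlap by (auto simp: overlap_sym)
qed

lemma induced_sum_pre_dense:
  assumes x: "x \<in> M"
    and dense: "pre_dense M (induced_sum M P) X (ideal_of M (induced_sum M P) x)"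
  shows "induced_sum M P x (ideal_of M (induced_sum M P) x \<inter> ideal_set M (induced_sum M P) X)"
proof -
  have dense': "\<exists>a\<in>X. overlap M P a b" if "P b x" for b
    using dense that unfolding pre_dense_def ideal_of_induced_sum s_overlaps_iff_overlap by blast
  have "\<exists>w\<in>{y. P y x} \<inter> {y. \<exists>a\<in>X. P y a}. overlap M P b w" if "P b x" for b
  proof -
    obtain a w where "a \<in> X" "w \<in> M" "P w a" "P w b"
      using dense' \<open>P b x\<close> unfolding overlap_def by blast
    then show ?thesis
      using \<open>P b x\<close> part_trans part_refl unfolding overlap_def by blast
  qed
  then show ?thesis
    using x unfolding ideal_of_induced_sum ideal_set_induced_sum induced_sum_def
    by (auto dest: part_in_carrier)
qed

end

theorem theorem4p1:
  fixes M :: "'a set" and P :: "'a \<Rightarrow> 'a \<Rightarrow> bool"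
  assumes "mereological_structure M P"
  shows "sum_structure M (induced_sum M P)"
proof -
  interpret mereology M P
    using assms by (rule mereology_if_mereological_structure)
  let ?S = "induced_sum M P"
  have carrier: "\<forall>x X. ?S x X \<longrightarrow> x \<in> M \<and> X \<subseteq> M"
    unfolding induced_sum_def by blast
  have S1: "\<forall>X. X \<subseteq> M \<and> X \<noteq> {} \<longrightarrow> (\<exists>x\<in>M. ?S x X)"
    using induced_sum_exists by blast
  have S2: "\<forall>x\<in>M. \<forall>y\<in>M. \<forall>X. X \<subseteq> M \<longrightarrow> ?S x X \<and> ?S y X \<longrightarrow> x = y"
    using induced_sum_unique by blast
  have S3: "\<forall>x\<in>M. \<forall>y\<in>M. \<forall>X Y. X \<subseteq> M \<and> Y \<subseteq> M \<longrightarrow>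
      ?S x X \<and> ?S y Y \<and> x \<in> Y \<longrightarrow> ?S y (X \<union> Y)"
    using induced_sum_Un by blast
  have S4: "\<forall>x\<in>M. \<forall>y\<in>M. \<forall>X Y. X \<subseteq> M \<and> Y \<subseteq> M \<longrightarrow> ?S x X \<and> ?S x Y \<and> y \<in> Y \<longrightarrow>
      (\<exists>z\<in>X. \<exists>Z U. Z \<subseteq> M \<and> U \<subseteq> M \<and> ?S z Z \<and> ?S y U \<and> Z \<inter> U \<noteq> {})"
    unfolding s_overlaps_def[symmetric] using induced_sum_summand_overlaps by blast
  have S5: "\<forall>x\<in>M. \<forall>X. X \<subseteq> M \<longrightarrow> pre_dense M ?S X (ideal_of M ?S x) \<longrightarrow>
      ?S x (ideal_of M ?S x \<inter> ideal_set M ?S X)"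
    using induced_sum_pre_dense by blast
  show ?thesis
    unfolding sum_structure_def by (intro conjI) (fact carrier S1 S2 S3 S4 S5)+
qed

end
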